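(* For every $\varepsilon>0$ and $\Delta>0$ there exists $c>0$ such that the following holds. Let $G$ be a connected graph on vertex set $[n]$ with maximum degree at most $\Delta$, let $R\sim G(n,\varepsilon/n)$ and $G^*=G\cup R$. Then asymptotically almost surely $G^*$ contains a path of length at least $cn$.
   Context: $G(n,p)$ denotes the binomial random graph on $[n]$ with each pair an edge independently with probability $p$; $G\cup R$ is the graph on $[n]$ with edge set the union of those of $G$ and $R$. Asymptotically almost surely means with probability tending to $1$ as $n\to\infty$, for an arbitrary sequence of such graphs $G=G_n$. *)

theory Defs
  imports "HOL-Probability.Probability"
begin

text \<open>Simple graphs on vertex set [n] = {0..<n}, represented by their edge sets:
  an edge is a 2-element set {u,v} with u \<noteq> v.\<close>

definition all_pairs :: "nat \<Rightarrow> nat set set" where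
  "all_pairs n = {{i, j} | i j. i < j \<and> j < n}"

definition is_graph :: "nat \<Rightarrow> nat set set \<Rightarrow> bool" where
  "is_graph n E \<longleftrightarrow> E \<subseteq> all_pairs n"

definition degree :: "nat set set \<Rightarrow> nat \<Rightarrow> nat" where
  "degree E u = card {v. {u, v} \<in> E}"

definition max_degree_le :: "nat \<Rightarrow> nat set set \<Rightarrow> real \<Rightarrow> bool" where
  "max_degree_le n E D \<longleftrightarrow> (\<forall>u<n. real (degree E u) \<le> D)"

definition connected_graph :: "nat \<Rightarrow> nat set set \<Rightarrow> bool" where
  "connected_graph n E \<longleftrightarrow>
     (\<forall>u<n. \<forall>v<n. (u, v) \<in> {(x, y). {x, y} \<in> E}\<^sup>*)"

definition is_path :: "nat \<Rightarrow> nat set set \<Rightarrow> nat list \<Rightarrow> bool" where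
  "is_path n E vs \<longleftrightarrow> vs \<noteq> [] \<and> distinct vs \<and> set vs \<subseteq> {..<n} \<and>
     (\<forall>i. Suc i < length vs \<longrightarrow> {vs ! i, vs ! Suc i} \<in> E)"

definition has_path_of_length_ge :: "nat \<Rightarrow> nat set set \<Rightarrow> real \<Rightarrow> bool" where
  "has_path_of_length_ge n E L \<longleftrightarrow> (\<exists>vs. is_path n E vs \<and> real (length vs - 1) \<ge> L)"

text \<open>The binomial random graph G(n,p): each pair in [n] independently an edge with
  probability p (bernoulli_pmf clamps p into [0,1]).\<close>

definition gnp :: "nat \<Rightarrow> real \<Rightarrow> nat set set pmf" where
  "gnp n p = map_pmf (\<lambda>b. {e \<in> all_pairs n. b e})
                     (Pi_pmf (all_pairs n) False (\<lambda>_. bernoulli_pmf p))"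

end

theory Submission
  imports Defs
begin

text \<open>Run depth-first search on \<open>G \<union> R\<close> and stop when the finished set S and the
  unvisited set T have equal size. The DFS stack is a path, and there are no edges between S and T.
  If \<open>G \<union> R\<close> has no path of length cn, then the stack has fewer than cn + 1 vertices, so
  |S| = |T| \<ge> n/6 and R avoids all of the at least (n/6)^2 pairs between S and T, which happens
  with probability at most \<open>exp (-\<epsilon> n/36)\<close>. A union bound over the possible (S, T) finishes the
  proof, because in a connected graph such a pair is determined by the small remainder U and by
  the part of S adjacent to U, which has at most \<Delta>|U| elements; for c small compared with
  \<open>\<epsilon>\<close> there are only \<open>O(exp (\<epsilon> n/72))\<close> such data.\<close>

definition separated :: "nat set set \<Rightarrow> nat set \<Rightarrow> nat set \<Rightarrow> bool" where
  "separated E S T \<longleftrightarrow> (\<forall>s\<in>S. \<forall>t\<in>T. {s, t} \<notin> E)"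

lemma separated_Un_iff: "separated (E \<union> F) S T \<longleftrightarrow> separated E S T \<and> separated F S T"
  unfolding separated_def by blast

lemma is_path_iff_successively:
  "is_path n E vs \<longleftrightarrow>
     vs \<noteq> [] \<and> distinct vs \<and> set vs \<subseteq> {..<n} \<and> successively (\<lambda>u v. {u, v} \<in> E) vs"
  unfolding is_path_def successively_conv_nth ..

text \<open>A snapshot of depth-first search: S holds the vertices whose exploration is finished,
  T the unvisited ones, and U is the stack, listed from bottom to top.\<close>

definition dfs_state :: "nat \<Rightarrow> nat set set \<Rightarrow> nat set \<Rightarrow> nat set \<Rightarrow> nat list \<Rightarrow> bool" where
  "dfs_state n E S T U \<longleftrightarrow>
     S \<inter> T = {} \<and> S \<inter> set U = {} \<and> T \<inter> set U = {} \<and> S \<union> T \<union> set U = {..<n} \<and>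
     distinct U \<and> successively (\<lambda>u v. {u, v} \<in> E) U \<and> separated E S T"

lemma dfs_state_finite:
  assumes "dfs_state n E S T U" shows "finite S" "finite T"
  using assms unfolding dfs_state_def by (metis finite_Un finite_lessThan)+

lemma dfs_state_push:
  assumes "dfs_state n E S T U" and "x \<in> T" and "U = [] \<or> {last U, x} \<in> E"
  shows "dfs_state n E S (T - {x}) (U @ [x])"
  using assms unfolding dfs_state_def separated_def by (auto simp: successively_append_iff)

lemma dfs_state_pop:
  assumes st: "dfs_state n E S T U" and "U \<noteq> []" and dead_end: "\<forall>x\<in>T. {last U, x} \<notin> E"
  shows "dfs_state n E (insert (last U) S) T (butlast U)"
proof -
  have U: "U = butlast U @ [last U]" using \<open>U \<noteq> []\<close> by simp
  have set_U: "set U = insert (last U) (set (butlast U))" using arg_cong[OF U, of set] by simp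
  have "distinct (butlast U @ [last U])" "successively (\<lambda>u v. {u, v} \<in> E) (butlast U @ [last U])"
    using st U unfolding dfs_state_def by metis+
  then have "distinct (butlast U)" "last U \<notin> set (butlast U)" "successively (\<lambda>u v. {u, v} \<in> E) (butlast U)"
    by (simp_all add: successively_append_iff)
  with st set_U dead_end show ?thesis
    unfolding dfs_state_def separated_def by blast
qed

lemma dfs_state_balance:
  assumes "dfs_state n E S T U" and "card S \<le> card T"
  shows "\<exists>S' T' U'. dfs_state n E S' T' U' \<and> card S' = card T'"
  using assms
proof (induction "card T - card S" arbitrary: S T U)
  case 0
  then show ?case by (metis diff_is_0_eq le_antisym)
next
  case (Suc k)
  note fin = dfs_state_finite[OF Suc.prems(1)]
  show ?case
  proof (cases "U = [] \<or> (\<exists>x\<in>T. {last U, x} \<in> E)")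
    case True
    then obtain x where x: "x \<in> T" "U = [] \<or> {last U, x} \<in> E"
      using Suc.hyps(2) by (metis card.empty diff_0_eq_0 ex_in_conv nat.distinct(1))
    have "card (T - {x}) = card T - 1" using x fin by simp
    then have "k = card (T - {x}) - card S" "card S \<le> card (T - {x})" using Suc.hyps(2) by linarith+
    then show ?thesis using Suc.hyps(1) dfs_state_push[OF Suc.prems(1) x] by blast
  next
    case False
    have "last U \<notin> S" using Suc.prems(1) False unfolding dfs_state_def by auto
    then have "card (insert (last U) S) = card S + 1" using fin by simp
    then have "k = card T - card (insert (last U) S)" "card (insert (last U) S) \<le> card T"
      using Suc.hyps(2) by linarith+
    then show ?thesis using Suc.hyps(1) dfs_state_pop[OF Suc.prems(1)] False by blast
  qed
qed

lemma dfs_balanced_state_exists: "\<exists>S T U. dfs_state n E S T U \<and> card S = card T"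
proof -
  have "dfs_state n E {} {..<n} []" unfolding dfs_state_def separated_def by auto
  then show ?thesis using dfs_state_balance by fastforce
qed

lemma dfs_separation:
  assumes "\<not> has_path_of_length_ge n E L" and "0 \<le> L"
  shows "\<exists>S T. S \<subseteq> {..<n} \<and> T \<subseteq> {..<n} \<and> S \<inter> T = {} \<and> separated E S T \<and>
           card S = card T \<and> real (card ({..<n} - S - T)) < L + 1"
proof -
  obtain S T U where st: "dfs_state n E S T U" and card_eq: "card S = card T"
    using dfs_balanced_state_exists by blast
  have rest: "{..<n} - S - T = set U" and "distinct U"
    using st unfolding dfs_state_def by auto
  then have card_rest: "card ({..<n} - S - T) = length U" by (simp add: distinct_card)
  have "real (length U) < L + 1"
  proof (cases "U = []")
    case False
    then have "is_path n E U" using st unfolding dfs_state_def is_path_iff_successively by auto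
    then show ?thesis using assms False unfolding has_path_of_length_ge_def by (auto simp: of_nat_diff)
  qed (use assms in simp)
  then show ?thesis using st card_eq card_rest unfolding dfs_state_def by (intro exI[of _ S] exI[of _ T]) auto
qed

lemma rtrancl_exits_set:
  assumes "(x, z) \<in> r\<^sup>*" and "x \<in> W" and "z \<notin> W"
  shows "\<exists>a\<in>W. \<exists>b. b \<notin> W \<and> (a, b) \<in> r"
  using assms by (induction rule: rtrancl_induct) auto

lemma all_pairs_memD: "{a, b} \<in> all_pairs n \<Longrightarrow> a < n \<and> b < n \<and> a \<noteq> b"
  unfolding all_pairs_def by (auto simp: doubleton_eq_iff)

lemma all_pairs_memI: "a < n \<Longrightarrow> b < n \<Longrightarrow> a \<noteq> b \<Longrightarrow> {a, b} \<in> all_pairs n"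
  unfolding all_pairs_def by (cases "a < b") (auto simp: doubleton_eq_iff, metis linorder_neqE_nat)

definition neighbourhood :: "nat set set \<Rightarrow> nat set \<Rightarrow> nat set" where
  "neighbourhood E U = {v. \<exists>u\<in>U. {u, v} \<in> E}"

definition separations :: "nat \<Rightarrow> nat set set \<Rightarrow> (nat set \<times> nat set) set" where
  "separations n E =
     {(S, T). S \<subseteq> {..<n} \<and> T \<subseteq> {..<n} \<and> S \<inter> T = {} \<and> T \<noteq> {} \<and> separated E S T}"

text \<open>A walk in G from x \<in> S - S' to T must leave S \<inter> T'; the separation properties force
  the exit edge to end in U, so it starts in S \<inter> N(U) = S' \<inter> N(U), contradicting S' \<inter> T' = {}.\<close>

lemma separation_determined_by_boundary:
  assumes G: "is_graph n G" "connected_graph n G"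
    and sep: "(S, T) \<in> separations n G" "(S', T') \<in> separations n G"
    and rest: "{..<n} - S - T = U" "{..<n} - S' - T' = U"
    and boundary: "S \<inter> neighbourhood G U = S' \<inter> neighbourhood G U"
  shows "S \<subseteq> S'"
proof
  fix x assume "x \<in> S"
  show "x \<in> S'"
  proof (rule ccontr)
    assume "x \<notin> S'"
    then have "x \<in> S \<inter> T'" using \<open>x \<in> S\<close> sep rest unfolding separations_def by blast
    obtain z where "z \<in> T" using sep unfolding separations_def by auto
    have "x < n" "z < n" and z: "z \<notin> S \<inter> T'"
      using sep \<open>x \<in> S\<close> \<open>z \<in> T\<close> unfolding separations_def by auto
    with G(2) have "(x, z) \<in> {(a, b). {a, b} \<in> G}\<^sup>*"
      unfolding connected_graph_def by blast
    then obtain a b where a: "a \<in> S \<inter> T'" and b: "b \<notin> S \<inter> T'" and "(a, b) \<in> {(a, b). {a, b} \<in> G}"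
      using rtrancl_exits_set[OF _ \<open>x \<in> S \<inter> T'\<close> z] by blast
    then have ab: "{a, b} \<in> G" by simp
    have "b < n" using ab G(1) all_pairs_memD unfolding is_graph_def by blast
    moreover have "b \<notin> T" and "b \<notin> S'"
      using a ab sep unfolding separations_def separated_def by (auto simp: insert_commute)
    ultimately have "b \<in> U" using b rest by blast
    then have "a \<in> S' \<inter> neighbourhood G U"
      using a ab boundary unfolding neighbourhood_def by (auto simp: insert_commute)
    then show False using a sep unfolding separations_def by blast
  qed
qed

lemma inj_on_separations_boundary:
  assumes "is_graph n G" "connected_graph n G"
  shows "inj_on (\<lambda>(S, T). ({..<n} - S - T, S \<inter> neighbourhood G ({..<n} - S - T)))
           (separations n G)"
proof (rule inj_onI, clarify)
  fix S T S' T'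
  assume sep: "(S, T) \<in> separations n G" "(S', T') \<in> separations n G"
    and rest: "{..<n} - S - T = {..<n} - S' - T'"
    and boundary: "S \<inter> neighbourhood G ({..<n} - S - T) = S' \<inter> neighbourhood G ({..<n} - S' - T')"
  have "S = S'"
    using separation_determined_by_boundary[OF assms sep refl rest[symmetric]]
      separation_determined_by_boundary[OF assms sep(2,1) refl rest] boundary rest by auto
  moreover have "T = {..<n} - S - ({..<n} - S - T)" "T' = {..<n} - S' - ({..<n} - S' - T')"
    using sep unfolding separations_def by auto
  ultimately show "S = S' \<and> T = T'" using rest by simp
qed

lemma sum_power_card_Pow:
  fixes x :: "'a :: comm_semiring_1"
  assumes "finite A"
  shows "(\<Sum>U\<in>Pow A. x ^ card U) = (x + 1) ^ card A"
  using prod_add[OF assms, of "\<lambda>_. x" "\<lambda>_. 1"] by simp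

text \<open>Rankin's trick: every counted set gets the weight x powr (card U - L) \<ge> 1.\<close>

lemma card_small_subsets_le:
  fixes x L :: real
  assumes "0 < x" "x \<le> 1"
  shows "real (card {U. U \<subseteq> {..<n} \<and> real (card U) < L}) \<le> x powr (- L) * (1 + x) ^ n"
proof -
  let ?small = "{U. U \<subseteq> {..<n} \<and> real (card U) < L}"
  have "real (card ?small) = (\<Sum>U\<in>?small. 1)" by simp
  also have "\<dots> \<le> (\<Sum>U\<in>?small. x powr (- L) * x ^ card U)"
  proof (intro sum_mono)
    fix U assume "U \<in> ?small"
    then have "x powr L \<le> x ^ card U"
      using assms by (auto intro: powr_mono' simp flip: powr_realpow)
    then show "1 \<le> x powr (- L) * x ^ card U"
      using assms by (simp add: powr_minus field_simps)
  qed
  also have "\<dots> \<le> (\<Sum>U\<in>Pow {..<n}. x powr (- L) * x ^ card U)"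
    using assms by (intro sum_mono2) auto
  also have "\<dots> = x powr (- L) * (1 + x) ^ n"
    by (simp add: sum_distrib_left[symmetric] sum_power_card_Pow add.commute)
  finally show ?thesis .
qed

lemma card_neighbourhood_le:
  assumes "max_degree_le n G D" and "U \<subseteq> {..<n}"
  shows "real (card (neighbourhood G U)) \<le> real (card U) * D"
proof -
  have "finite U" using assms(2) finite_subset by blast
  have "neighbourhood G U = (\<Union>u\<in>U. {v. {u, v} \<in> G})" unfolding neighbourhood_def by blast
  then have "card (neighbourhood G U) \<le> (\<Sum>u\<in>U. degree G u)"
    using \<open>finite U\<close> unfolding degree_def by (simp add: card_UN_le)
  then have "real (card (neighbourhood G U)) \<le> (\<Sum>u\<in>U. real (degree G u))"
    by (metis of_nat_le_iff of_nat_sum)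
  also have "\<dots> \<le> (\<Sum>u\<in>U. D)"
    using assms unfolding max_degree_le_def by (intro sum_mono) auto
  finally show ?thesis by simp
qed

lemma card_separations_small_rest_le:
  assumes G: "is_graph n G" "connected_graph n G" "max_degree_le n G D" and "0 \<le> D"
  shows "real (card {(S, T) \<in> separations n G. real (card ({..<n} - S - T)) < L})
           \<le> real (card {U. U \<subseteq> {..<n} \<and> real (card U) < L}) * 2 powr (D * L)"
proof -
  let ?small = "{U. U \<subseteq> {..<n} \<and> real (card U) < L}"
  let ?codes = "Sigma ?small (\<lambda>U. Pow (neighbourhood G U))"
  have fin_small: "finite ?small" by (rule finite_subset[of _ "Pow {..<n}"]) auto
  have "neighbourhood G U \<subseteq> {..<n}" for U
    using G(1) all_pairs_memD unfolding is_graph_def neighbourhood_def by blast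
  then have fin_nbr: "finite (neighbourhood G U)" for U
    by (meson finite_lessThan finite_subset)
  have "card {(S, T) \<in> separations n G. real (card ({..<n} - S - T)) < L} \<le> card ?codes"
    using fin_small fin_nbr
    by (intro card_inj_on_le[OF inj_on_subset[OF inj_on_separations_boundary[OF G(1,2)]]]) auto
  also have "card ?codes = (\<Sum>U\<in>?small. 2 ^ card (neighbourhood G U))"
    using fin_small fin_nbr by (simp add: card_SigmaI card_Pow)
  finally have "real (card {(S, T) \<in> separations n G. real (card ({..<n} - S - T)) < L})
      \<le> real (\<Sum>U\<in>?small. 2 ^ card (neighbourhood G U))"
    by (rule of_nat_mono)
  also have "\<dots> = (\<Sum>U\<in>?small. (2::real) ^ card (neighbourhood G U))" by simp
  also have "\<dots> \<le> (\<Sum>U\<in>?small. 2 powr (D * L))"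
  proof (intro sum_mono)
    fix U assume U: "U \<in> ?small"
    then have "real (card (neighbourhood G U)) \<le> real (card U) * D"
      using card_neighbourhood_le[OF G(3)] by blast
    also have "\<dots> \<le> L * D" using U \<open>0 \<le> D\<close> by (intro mult_right_mono) auto
    finally show "(2::real) ^ card (neighbourhood G U) \<le> 2 powr (D * L)"
      by (simp add: mult.commute flip: powr_realpow)
  qed
  finally show ?thesis by simp
qed

lemma finite_all_pairs: "finite (all_pairs n)"
  by (rule finite_subset[of _ "Pow {..<n}"]) (auto simp: all_pairs_def)

lemma prob_gnp_separated_le:
  assumes "S \<subseteq> {..<n}" "T \<subseteq> {..<n}" "S \<inter> T = {}" and p: "0 \<le> p" "p \<le> 1"
  shows "measure_pmf.prob (gnp n p) {R. separated R S T} \<le> exp (- p * (real (card S) * real (card T)))"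
proof -
  define pairs where "pairs = (\<lambda>(s, t). {s, t :: nat}) ` (S \<times> T)"
  have pairs_sub: "pairs \<subseteq> all_pairs n" unfolding pairs_def using assms by (auto intro!: all_pairs_memI)
  have "inj_on (\<lambda>(s, t). {s, t :: nat}) (S \<times> T)"
    using assms(3) unfolding inj_on_def by (auto simp: doubleton_eq_iff)
  then have card_pairs: "card pairs = card S * card T"
    unfolding pairs_def by (simp add: card_image card_cartesian_product)
  have preimage: "(\<lambda>b. {e \<in> all_pairs n. b e}) -` {R. separated R S T}
      = Pi (all_pairs n) (\<lambda>e. if e \<in> pairs then {False} else UNIV)"
    using pairs_sub unfolding pairs_def separated_def Pi_def by auto
  have "measure_pmf.prob (gnp n p) {R. separated R S T}
      = (\<Prod>e\<in>all_pairs n. measure_pmf.prob (bernoulli_pmf p) (if e \<in> pairs then {False} else UNIV))"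
    unfolding gnp_def measure_map_pmf preimage by (rule measure_Pi_pmf_Pi[OF finite_all_pairs])
  also have "\<dots> = (\<Prod>e\<in>all_pairs n. if e \<in> pairs then 1 - p else 1)"
    using p by (intro prod.cong) (auto simp: measure_pmf_single)
  also have "\<dots> = (1 - p) ^ card pairs"
    using pairs_sub finite_all_pairs by (simp add: prod.If_cases Int_absorb1)
  also have "\<dots> \<le> exp (- p) ^ card pairs"
    using p by (intro power_mono) (auto simp: exp_ge_add_one_self[of "-p", simplified])
  also have "\<dots> = exp (- p * (real (card S) * real (card T)))"
    by (simp add: card_pairs exp_of_nat_mult[symmetric] mult.commute)
  finally show ?thesis .
qed

lemma no_long_path_imp_large_separation:
  assumes "\<not> has_path_of_length_ge n E (c * real n)" and c: "0 \<le> c" "c \<le> 1/2" and "6 \<le> n"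
  shows "\<exists>S T. (S, T) \<in> separations n E \<and> real (card ({..<n} - S - T)) < c * real n + 1 \<and>
           real n / 6 \<le> real (card S) \<and> real n / 6 \<le> real (card T)"
proof -
  obtain S T where ST: "S \<subseteq> {..<n}" "T \<subseteq> {..<n}" "S \<inter> T = {}" "separated E S T"
    and card_eq: "card S = card T" and rest: "real (card ({..<n} - S - T)) < c * real n + 1"
    using dfs_separation[OF assms(1)] c by auto
  have "{..<n} - S - T = {..<n} - (S \<union> T)" by blast
  then have "card ({..<n} - S - T) = n - card (S \<union> T)" "card (S \<union> T) \<le> n"
    using ST card_Diff_subset[of "S \<union> T" "{..<n}"] card_mono[of "{..<n}" "S \<union> T"]
    by (auto intro: finite_subset)
  moreover have "card (S \<union> T) = card S + card T"
    using ST by (intro card_Un_disjoint) (auto intro: finite_subset)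
  moreover have "c * real n \<le> 1/2 * real n" using c by (intro mult_right_mono) auto
  ultimately have large: "real n / 6 \<le> real (card S)" using rest card_eq \<open>6 \<le> n\<close> by linarith
  then have "T \<noteq> {}" using card_eq \<open>6 \<le> n\<close> by auto
  with ST card_eq rest large show ?thesis unfolding separations_def by (intro exI[of _ S] exI[of _ T]) auto
qed

lemma card_separations_small_rest_le_exp:
  assumes G: "is_graph n G" "connected_graph n G" "max_degree_le n G D" and "0 \<le> D"
    and x: "0 < x" "x \<le> 1"
  shows "real (card {(S, T) \<in> separations n G. real (card ({..<n} - S - T)) < L})
           \<le> exp (L * (ln (1 / x) + D * ln 2) + x * real n)"
proof -
  have "real (card {(S, T) \<in> separations n G. real (card ({..<n} - S - T)) < L})
      \<le> x powr (- L) * (1 + x) ^ n * 2 powr (D * L)"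
    using card_separations_small_rest_le[OF G \<open>0 \<le> D\<close>, of L] card_small_subsets_le[OF x, of n L]
    by (meson mult_right_mono order_trans powr_ge_zero)
  also have "\<dots> \<le> x powr (- L) * exp x ^ n * 2 powr (D * L)"
    using x by (intro mult_right_mono mult_left_mono power_mono) (auto simp: add.commute exp_ge_add_one_self)
  also have "\<dots> = exp (L * (ln (1 / x) + D * ln 2) + x * real n)"
    using x by (simp add: powr_def ln_div exp_add exp_diff exp_minus exp_of_nat_mult[symmetric] field_simps)
  finally show ?thesis .
qed

lemma prob_gnp_separated_large_le:
  assumes ST: "S \<subseteq> {..<n}" "T \<subseteq> {..<n}" "S \<inter> T = {}"
    and large: "real n / 6 \<le> real (card S)" "real n / 6 \<le> real (card T)"
    and \<epsilon>: "0 < \<epsilon>" "\<epsilon> \<le> real n"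
  shows "measure_pmf.prob (gnp n (\<epsilon> / real n)) {R. separated R S T} \<le> exp (- \<epsilon> * real n / 36)"
proof -
  have p: "0 \<le> \<epsilon> / real n" "\<epsilon> / real n \<le> 1" using \<epsilon> by auto
  have "\<epsilon> * real n / 36 = \<epsilon> / real n * ((real n / 6) * (real n / 6))"
    using \<epsilon> by (simp add: field_simps)
  also have "\<dots> \<le> \<epsilon> / real n * (real (card S) * real (card T))"
    using large p by (intro mult_left_mono mult_mono) auto
  finally have "exp (- (\<epsilon> / real n) * (real (card S) * real (card T))) \<le> exp (- \<epsilon> * real n / 36)"
    by simp
  with prob_gnp_separated_le[OF ST p] show ?thesis by linarith
qed

lemma prob_no_long_path_le:
  assumes c: "0 \<le> c" "c \<le> 1/2" and n: "6 \<le> n" "0 < \<epsilon>" "\<epsilon> \<le> real n"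
  shows "measure_pmf.prob (gnp n (\<epsilon> / real n)) {R. \<not> has_path_of_length_ge n (G \<union> R) (c * real n)}
           \<le> real (card {(S, T) \<in> separations n G. real (card ({..<n} - S - T)) < c * real n + 1})
              * exp (- \<epsilon> * real n / 36)"
proof -
  let ?M = "gnp n (\<epsilon> / real n)"
  let ?small = "{(S, T) \<in> separations n G. real (card ({..<n} - S - T)) < c * real n + 1}"
  define F where "F = {(S, T) \<in> ?small. real n / 6 \<le> real (card S) \<and> real n / 6 \<le> real (card T)}"
  have fin: "finite ?small"
    by (rule finite_subset[of _ "Pow {..<n} \<times> Pow {..<n}"]) (auto simp: separations_def)
  have "F \<subseteq> ?small" unfolding F_def by auto
  then have "finite F" and card_F: "card F \<le> card ?small" using fin by (auto intro: finite_subset card_mono)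
  have "{R. \<not> has_path_of_length_ge n (G \<union> R) (c * real n)} \<subseteq> (\<Union>(S, T)\<in>F. {R. separated R S T})"
  proof
    fix R assume "R \<in> {R. \<not> has_path_of_length_ge n (G \<union> R) (c * real n)}"
    then obtain S T where "(S, T) \<in> separations n (G \<union> R)" "real (card ({..<n} - S - T)) < c * real n + 1"
        "real n / 6 \<le> real (card S)" "real n / 6 \<le> real (card T)"
      using no_long_path_imp_large_separation[OF _ c n(1)] by blast
    then have "(S, T) \<in> F" "separated R S T"
      unfolding F_def separations_def separated_Un_iff by auto
    then show "R \<in> (\<Union>(S, T)\<in>F. {R. separated R S T})" by blast
  qed
  then have "measure_pmf.prob ?M {R. \<not> has_path_of_length_ge n (G \<union> R) (c * real n)}
      \<le> measure_pmf.prob ?M (\<Union>(S, T)\<in>F. {R. separated R S T})"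
    by (intro measure_pmf.finite_measure_mono) auto
  also have "\<dots> \<le> (\<Sum>(S, T)\<in>F. measure_pmf.prob ?M {R. separated R S T})"
    using measure_UNION_le[OF \<open>finite F\<close>, of "\<lambda>(S, T). {R. separated R S T}" ?M]
    by (simp add: case_prod_unfold)
  also have "\<dots> \<le> (\<Sum>(S, T)\<in>F. exp (- \<epsilon> * real n / 36))"
  proof (intro sum_mono, clarify)
    fix S T assume "(S, T) \<in> F"
    then show "measure_pmf.prob ?M {R. separated R S T} \<le> exp (- \<epsilon> * real n / 36)"
      using n(2,3) unfolding F_def separations_def by (intro prob_gnp_separated_large_le) auto
  qed
  also have "\<dots> \<le> real (card ?small) * exp (- \<epsilon> * real n / 36)"
    using card_F by simp
  finally show ?thesis .
qed

lemma prob_long_path_ge: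
  fixes \<epsilon> \<Delta> x c K :: real
  assumes G: "is_graph n G" "connected_graph n G" "max_degree_le n G \<Delta>" and "0 \<le> \<Delta>"
    and x: "0 < x" "x \<le> 1" "x \<le> \<epsilon> / 144" and K: "K = ln (1 / x) + \<Delta> * ln 2"
    and c: "0 \<le> c" "c \<le> 1/2" "c * K \<le> \<epsilon> / 144"
    and n: "6 \<le> n" "0 < \<epsilon>" "\<epsilon> \<le> real n"
  shows "1 - exp (K - \<epsilon> / 72 * real n)
           \<le> measure_pmf.prob (gnp n (\<epsilon> / real n)) {R. has_path_of_length_ge n (G \<union> R) (c * real n)}"
proof -
  have "c * K * real n \<le> \<epsilon> / 144 * real n" using c(3) by (intro mult_right_mono) auto
  moreover have "x * real n \<le> \<epsilon> / 144 * real n" using x(3) by (intro mult_right_mono) auto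
  ultimately have "(c * real n + 1) * K + x * real n - \<epsilon> * real n / 36 \<le> K - \<epsilon> / 72 * real n"
    by (simp add: algebra_simps)
  then have "exp ((c * real n + 1) * K + x * real n) * exp (- \<epsilon> * real n / 36) \<le> exp (K - \<epsilon> / 72 * real n)"
    by (simp flip: exp_add)
  then have "measure_pmf.prob (gnp n (\<epsilon> / real n)) {R. \<not> has_path_of_length_ge n (G \<union> R) (c * real n)}
      \<le> exp (K - \<epsilon> / 72 * real n)"
    using prob_no_long_path_le[OF c(1,2) n, of G] card_separations_small_rest_le_exp[OF G \<open>0 \<le> \<Delta>\<close> x(1,2)]
    unfolding K by (meson exp_gt_zero less_imp_le mult_right_mono order_trans)
  moreover have "{R. has_path_of_length_ge n (G \<union> R) (c * real n)}
      = space (measure_pmf (gnp n (\<epsilon> / real n))) - {R. \<not> has_path_of_length_ge n (G \<union> R) (c * real n)}"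
    by auto
  ultimately show ?thesis
    using measure_pmf.prob_compl[of "{R. \<not> has_path_of_length_ge n (G \<union> R) (c * real n)}" "gnp n (\<epsilon> / real n)"]
    by simp
qed

lemma exists_small_multiplier:
  fixes K e :: real
  assumes "0 \<le> K" "0 < e"
  shows "\<exists>c>0. c \<le> 1/2 \<and> c * K \<le> e"
proof (intro exI conjI)
  let ?c = "min (1/2) (e / (K + 1))"
  show "0 < ?c" using assms by simp
  show "?c \<le> 1/2" by (rule min.cobounded1)
  have "?c * K \<le> e / (K + 1) * K" using assms by (intro mult_right_mono) auto
  also have "\<dots> \<le> e" using assms by (simp add: field_simps)
  finally show "?c * K \<le> e" .
qed

lemma tendsto_one_minus_exp_decay:
  fixes a K :: real
  assumes "0 < a"
  shows "(\<lambda>n. 1 - exp (K - a * real n)) \<longlonglongrightarrow> 1"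
proof -
  have "(\<lambda>n. exp K * exp (- a) ^ n) \<longlonglongrightarrow> 0"
    using assms by (intro tendsto_mult_right_zero LIMSEQ_power_zero) auto
  then have "(\<lambda>n. 1 - exp K * exp (- a) ^ n) \<longlonglongrightarrow> 1 - 0"
    by (intro tendsto_diff tendsto_const)
  then show ?thesis by (simp add: exp_diff exp_minus exp_of_nat_mult[symmetric] power_divide field_simps)
qed

lemma eventually_prob_long_path_ge:
  fixes \<epsilon> \<Delta> x c K :: real
  assumes G: "\<forall>n. is_graph n (G n) \<and> connected_graph n (G n) \<and> max_degree_le n (G n) \<Delta>"
    and "0 \<le> \<Delta>" and x: "0 < x" "x \<le> 1" "x \<le> \<epsilon> / 144" and K: "K = ln (1 / x) + \<Delta> * ln 2"
    and c: "0 \<le> c" "c \<le> 1/2" "c * K \<le> \<epsilon> / 144" and "0 < \<epsilon>"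
  shows "eventually (\<lambda>n. 1 - exp (K - \<epsilon> / 72 * real n) \<le> measure_pmf.prob (gnp n (\<epsilon> / real n))
           {R. has_path_of_length_ge n (G n \<union> R) (c * real n)}) sequentially"
  using eventually_ge_at_top[of "max 6 (nat \<lceil>\<epsilon>\<rceil>)"]
proof eventually_elim
  case (elim n)
  then have n: "6 \<le> n" "\<epsilon> \<le> real n" by linarith+
  have "is_graph n (G n)" "connected_graph n (G n)" "max_degree_le n (G n) \<Delta>"
    using G by auto
  from prob_long_path_ge[OF this \<open>0 \<le> \<Delta>\<close> x K c n(1) \<open>0 < \<epsilon>\<close> n(2)] show ?case .
qed

theorem theorem6:
  fixes \<epsilon> \<Delta> :: real
  assumes "\<epsilon> > 0" and "\<Delta> > 0"
  shows "\<exists>c>0. \<forall>G :: nat \<Rightarrow> nat set set.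
           (\<forall>n. is_graph n (G n) \<and> connected_graph n (G n) \<and> max_degree_le n (G n) \<Delta>) \<longrightarrow>
           (\<lambda>n. measure_pmf.prob (gnp n (\<epsilon> / real n))
                   {R. has_path_of_length_ge n (G n \<union> R) (c * real n)}) \<longlonglongrightarrow> 1"
proof -
  define x where "x = min 1 (\<epsilon> / 144)"
  define K where "K = ln (1 / x) + \<Delta> * ln 2"
  have x: "0 < x" "x \<le> 1" "x \<le> \<epsilon> / 144" using assms by (auto simp: x_def)
  then have "0 \<le> ln (1 / x)" by simp
  then have "0 \<le> K" using assms by (simp add: K_def)
  then obtain c where c: "0 < c" "c \<le> 1/2" "c * K \<le> \<epsilon> / 144"
    using exists_small_multiplier assms by (metis divide_pos_pos zero_less_numeral)
  show ?thesis
  proof (intro exI[of _ c] conjI allI impI)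
    fix G :: "nat \<Rightarrow> nat set set"
    assume G: "\<forall>n. is_graph n (G n) \<and> connected_graph n (G n) \<and> max_degree_le n (G n) \<Delta>"
    let ?prob = "\<lambda>n. measure_pmf.prob (gnp n (\<epsilon> / real n))
                     {R. has_path_of_length_ge n (G n \<union> R) (c * real n)}"
    have "eventually (\<lambda>n. 1 - exp (K - \<epsilon> / 72 * real n) \<le> ?prob n) sequentially"
      using eventually_prob_long_path_ge[OF G less_imp_le[OF assms(2)] x K_def less_imp_le[OF c(1)] c(2,3) assms(1)] .
    moreover have "eventually (\<lambda>n. ?prob n \<le> 1) sequentially" by simp
    moreover have "(\<lambda>n. 1 - exp (K - \<epsilon> / 72 * real n)) \<longlonglongrightarrow> 1"
      by (rule tendsto_one_minus_exp_decay) (use assms in simp)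
    ultimately show "?prob \<longlonglongrightarrow> 1" by (rule tendsto_sandwich[OF _ _ _ tendsto_const])
  qed (rule c(1))
qed

end
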